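(* For $m\leq n$, the module $\mathcal P_n/J_m$ is free as a right $R\mathfrak S_m$-module.
   Context: $R$ is a commutative ring, $\delta\in R$, and $\mathcal P_n=\mathcal P_n(R,\delta)$ is the partition algebra: the free $R$-module on set partitions ("diagrams") of $\{-n,\dots,-1,1,\dots,n\}$ (negative = left nodes, positive = right nodes), with product by stacking, taking the induced partition on outer nodes, and multiplying by $\delta$ for each component consisting only of middle nodes. $J_m\subseteq\mathcal P_n$ is the left ideal spanned by all diagrams in which, among the right nodes $n-m+1,\dots,n$, there is at least one singleton block or at least one pair of distinct nodes in the same block. $R\mathfrak S_m$ acts on the right of $\mathcal P_n$ via $R\mathfrak S_m\subseteq\mathcal P_m\subseteq\mathcal P_n$, where $\mathcal P_m\subseteq\mathcal P_n$ by relabelling $\pm i\mapsto\pm(n-m+i)$ and adjoining blocks $\{-i,i\}$ for $1\leq i\leq n-m$, and $\mathfrak S_m\subseteq\mathcal P_m$ as the permutation diagrams (all blocks of the form $\{-i,j\}$); this action preserves $J_m$. *)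

theory Defs
  imports Main "HOL-Library.Disjoint_Sets" "HOL-Combinatorics.Permutations"
begin

text \<open>Nodes: left nodes -n..-1 (negative), right nodes 1..n (positive).\<close>
definition nodes :: "nat \<Rightarrow> int set" where
  "nodes n = {- int n .. -1} \<union> {1 .. int n}"

definition Diag :: "nat \<Rightarrow> int set set set" where
  "Diag n = {d. partition_on (nodes n) d}"

text \<open>Stacking d1 (left) with d2 (right): right nodes of d1 are glued to the left
  nodes of d2.  Tags: 0 = outer left nodes (of d1), 1 = middle, 2 = outer right (of d2).\<close>
definition emb1 :: "int \<Rightarrow> nat \<times> int" where
  "emb1 i = (if i < 0 then (0, i) else (1, i))"

definition emb2 :: "int \<Rightarrow> nat \<times> int" where
  "emb2 i = (if i < 0 then (1, - i) else (2, i))"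

definition stack_nodes :: "nat \<Rightarrow> (nat \<times> int) set" where
  "stack_nodes n = emb1 ` nodes n \<union> emb2 ` nodes n"

definition middle_nodes :: "nat \<Rightarrow> (nat \<times> int) set" where
  "middle_nodes n = {(1, i) | i. 1 \<le> i \<and> i \<le> int n}"

definition outer_nodes :: "nat \<Rightarrow> (nat \<times> int) set" where
  "outer_nodes n = stack_nodes n - middle_nodes n"

definition stack_rel :: "int set set \<Rightarrow> int set set \<Rightarrow> ((nat \<times> int) \<times> (nat \<times> int)) set" where
  "stack_rel d1 d2 =
     ({(emb1 x, emb1 y) | x y. \<exists>B\<in>d1. x \<in> B \<and> y \<in> B}
      \<union> {(emb2 x, emb2 y) | x y. \<exists>B\<in>d2. x \<in> B \<and> y \<in> B})\<^sup>*"

definition stack_comps :: "nat \<Rightarrow> int set set \<Rightarrow> int set set \<Rightarrow> (nat \<times> int) set set" where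
  "stack_comps n d1 d2 = stack_nodes n // stack_rel d1 d2"

definition dcomp :: "nat \<Rightarrow> int set set \<Rightarrow> int set set \<Rightarrow> int set set" where
  "dcomp n d1 d2 = {snd ` (C \<inter> outer_nodes n) | C. C \<in> stack_comps n d1 d2 \<and> C \<inter> outer_nodes n \<noteq> {}}"

definition nmid :: "nat \<Rightarrow> int set set \<Rightarrow> int set set \<Rightarrow> nat" where
  "nmid n d1 d2 = card {C \<in> stack_comps n d1 d2. C \<subseteq> middle_nodes n}"

text \<open>Elements: R-valued coefficient functions on diagrams (free R-module on Diag n).\<close>
definition Pn :: "nat \<Rightarrow> (int set set \<Rightarrow> 'r::comm_ring_1) set" where
  "Pn n = {f. \<forall>d. d \<notin> Diag n \<longrightarrow> f d = 0}"

definition pmult :: "'r::comm_ring_1 \<Rightarrow> nat \<Rightarrow> (int set set \<Rightarrow> 'r) \<Rightarrow> (int set set \<Rightarrow> 'r) \<Rightarrow> (int set set \<Rightarrow> 'r)" where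
  "pmult \<delta> n f g = (\<lambda>e. \<Sum>d1\<in>Diag n. \<Sum>d2\<in>Diag n.
      if dcomp n d1 d2 = e then f d1 * g d2 * \<delta> ^ nmid n d1 d2 else 0)"

definition last_right :: "nat \<Rightarrow> nat \<Rightarrow> int set" where
  "last_right n m = {int n - int m + 1 .. int n}"

definition Jdiag :: "nat \<Rightarrow> nat \<Rightarrow> int set set \<Rightarrow> bool" where
  "Jdiag n m d \<longleftrightarrow>
     (\<exists>j\<in>last_right n m. {j} \<in> d) \<or>
     (\<exists>j\<in>last_right n m. \<exists>k\<in>last_right n m. j \<noteq> k \<and> (\<exists>B\<in>d. j \<in> B \<and> k \<in> B))"

definition Jm :: "nat \<Rightarrow> nat \<Rightarrow> (int set set \<Rightarrow> 'r::comm_ring_1) set" where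
  "Jm n m = {f \<in> Pn n. \<forall>d. f d \<noteq> 0 \<longrightarrow> Jdiag n m d}"

definition perms :: "nat \<Rightarrow> (nat \<Rightarrow> nat) set" where
  "perms m = {\<sigma>. \<sigma> permutes {1..m}}"

definition RS :: "nat \<Rightarrow> ((nat \<Rightarrow> nat) \<Rightarrow> 'r::comm_ring_1) set" where
  "RS m = {a. \<forall>\<sigma>. \<sigma> \<notin> perms m \<longrightarrow> a \<sigma> = 0}"

text \<open>Permutation diagram of sigma in P_m (blocks {-i, sigma i}), embedded in P_n by
  relabelling +-i to +-(n-m+i) and adjoining blocks {-i,i} for i \<le> n-m.\<close>
definition perm_diag :: "nat \<Rightarrow> nat \<Rightarrow> (nat \<Rightarrow> nat) \<Rightarrow> int set set" where
  "perm_diag n m \<sigma> =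
     {{- int i, int i} | i. 1 \<le> i \<and> i \<le> n - m}
     \<union> {{- (int (n - m) + int i), int (n - m) + int (\<sigma> i)} | i. 1 \<le> i \<and> i \<le> m}"

definition RS_emb :: "nat \<Rightarrow> nat \<Rightarrow> ((nat \<Rightarrow> nat) \<Rightarrow> 'r::comm_ring_1) \<Rightarrow> (int set set \<Rightarrow> 'r)" where
  "RS_emb n m a = (\<lambda>d. \<Sum>\<sigma>\<in>perms m. if perm_diag n m \<sigma> = d then a \<sigma> else 0)"

definition ract :: "'r::comm_ring_1 \<Rightarrow> nat \<Rightarrow> nat \<Rightarrow> (int set set \<Rightarrow> 'r) \<Rightarrow> ((nat \<Rightarrow> nat) \<Rightarrow> 'r) \<Rightarrow> (int set set \<Rightarrow> 'r)" where
  "ract \<delta> n m f a = pmult \<delta> n f (RS_emb n m a)"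

text \<open>B (a set of representatives in P_n) maps to a basis of P_n/J_m over R S_m:
  every class is a finitely supported combination sum_b b.a_b, and such a combination
  lies in J_m only if all coefficients vanish.\<close>
definition free_quotient_basis ::
  "'r::comm_ring_1 \<Rightarrow> nat \<Rightarrow> nat \<Rightarrow> (int set set \<Rightarrow> 'r) set \<Rightarrow> bool" where
  "free_quotient_basis \<delta> n m B \<longleftrightarrow>
     B \<subseteq> Pn n \<and>
     (\<forall>f\<in>Pn n. \<exists>a. (\<forall>b\<in>B. a b \<in> RS m) \<and> finite {b\<in>B. a b \<noteq> (\<lambda>_. 0)} \<and>
        (\<lambda>d. f d - (\<Sum>b\<in>{b\<in>B. a b \<noteq> (\<lambda>_. 0)}. ract \<delta> n m b (a b) d)) \<in> Jm n m) \<and>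
     (\<forall>a. (\<forall>b\<in>B. a b \<in> RS m) \<and> finite {b\<in>B. a b \<noteq> (\<lambda>_. 0)} \<and>
        (\<lambda>d. \<Sum>b\<in>{b\<in>B. a b \<noteq> (\<lambda>_. 0)}. ract \<delta> n m b (a b) d) \<in> Jm n m
        \<longrightarrow> (\<forall>b\<in>B. a b = (\<lambda>_. 0)))"

definition free_right_RS_quotient :: "'r::comm_ring_1 \<Rightarrow> nat \<Rightarrow> nat \<Rightarrow> bool" where
  "free_right_RS_quotient \<delta> n m \<longleftrightarrow> (\<exists>B. free_quotient_basis \<delta> n m B)"

end

(* Right multiplication of a diagram d by the permutation diagram of sigma in S_m
   creates no closed middle components: it only relabels the right nodes n-m+1..n
   of d by sigma.  The diagrams outside J_m are stable under this relabelling, and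
   S_m acts freely on them, because each of the last m right nodes lies in a block
   that also contains a node which is not relabelled.  So these diagrams split into
   free S_m-orbits, and the basis vectors of a set of orbit representatives form a
   basis of P_n/J_m over R S_m.  Over the zero ring all basis vectors coincide, and
   the empty set is a basis instead. *)

theory Submission
  imports Defs "HOL-Algebra.Sym_Groups"
begin

section \<open>Free group actions and transversals\<close>

locale free_action = group G for G :: "('g, 'b) monoid_scheme" (structure) +
  fixes X :: "'x set" and act :: "'g \<Rightarrow> 'x \<Rightarrow> 'x"
  assumes act_closed: "\<lbrakk>g \<in> carrier G; x \<in> X\<rbrakk> \<Longrightarrow> act g x \<in> X"
    and act_one: "x \<in> X \<Longrightarrow> act \<one> x = x"
    and act_mult: "\<lbrakk>g \<in> carrier G; h \<in> carrier G; x \<in> X\<rbrakk> \<Longrightarrow> act (g \<otimes> h) x = act g (act h x)"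
    and act_free: "\<lbrakk>g \<in> carrier G; h \<in> carrier G; x \<in> X; act g x = act h x\<rbrakk> \<Longrightarrow> g = h"
begin

lemma orbit_act:
  assumes "g \<in> carrier G" "x \<in> X"
  shows "(\<lambda>h. act h (act g x)) ` carrier G = (\<lambda>h. act h x) ` carrier G"
  \<comment> \<open>HOL-Algebra shadows set_eqI, hence the qualified name here and below.\<close>
proof (intro Set.set_eqI iffI)
  fix y assume "y \<in> (\<lambda>h. act h (act g x)) ` carrier G"
  then obtain h where "h \<in> carrier G" "y = act (h \<otimes> g) x" using assms act_mult by auto
  then show "y \<in> (\<lambda>h. act h x) ` carrier G" using assms by blast
next
  fix y assume "y \<in> (\<lambda>h. act h x) ` carrier G"
  then obtain h where h: "h \<in> carrier G" "y = act h x" by blast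
  have "act (h \<otimes> inv g) (act g x) = act (h \<otimes> inv g \<otimes> g) x"
    using h(1) assms by (simp add: act_mult)
  also have "\<dots> = y" using h assms by (simp add: m_assoc)
  finally have "y = act (h \<otimes> inv g) (act g x)" ..
  then show "y \<in> (\<lambda>h. act h (act g x)) ` carrier G" using h(1) assms by blast
qed

definition orbit_rep :: "'x \<Rightarrow> 'x" where
  "orbit_rep x = (SOME y. y \<in> (\<lambda>g. act g x) ` carrier G)"

lemma orbit_rep_in_orbit:
  assumes "x \<in> X"
  obtains g where "g \<in> carrier G" "orbit_rep x = act g x"
proof -
  have "x \<in> (\<lambda>g. act g x) ` carrier G" using assms act_one by force
  then have "orbit_rep x \<in> (\<lambda>g. act g x) ` carrier G" unfolding orbit_rep_def by (rule someI)
  then show ?thesis using that by blast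
qed

lemma orbit_rep_in: "x \<in> X \<Longrightarrow> orbit_rep x \<in> X"
  by (metis orbit_rep_in_orbit act_closed)

lemma orbit_rep_act: "\<lbrakk>g \<in> carrier G; x \<in> X\<rbrakk> \<Longrightarrow> orbit_rep (act g x) = orbit_rep x"
  unfolding orbit_rep_def by (simp add: orbit_act)

lemma orbit_rep_idem: "x \<in> X \<Longrightarrow> orbit_rep (orbit_rep x) = orbit_rep x"
  by (metis orbit_rep_in_orbit orbit_rep_act)

lemma transversal_exists:
  obtains R where "R \<subseteq> X" "bij_betw (\<lambda>(r, g). act g r) (R \<times> carrier G) X"
proof
  show "orbit_rep ` X \<subseteq> X" using orbit_rep_in by blast
  show "bij_betw (\<lambda>(r, g). act g r) (orbit_rep ` X \<times> carrier G) X"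
    unfolding bij_betw_def
  proof
    show "inj_on (\<lambda>(r, g). act g r) (orbit_rep ` X \<times> carrier G)"
    proof (rule inj_onI, clarsimp)
      fix x y g h
      assume xy: "x \<in> X" "y \<in> X" "g \<in> carrier G" "h \<in> carrier G"
        and eq: "act g (orbit_rep x) = act h (orbit_rep y)"
      have "orbit_rep x = orbit_rep y"
        using orbit_rep_act[OF xy(3) orbit_rep_in[OF xy(1)]] orbit_rep_act[OF xy(4) orbit_rep_in[OF xy(2)]]
          eq orbit_rep_idem xy(1,2) by simp
      then show "orbit_rep x = orbit_rep y \<and> g = h"
        using act_free[OF xy(3,4) orbit_rep_in[OF xy(2)]] eq by simp
    qed
    show "(\<lambda>(r, g). act g r) ` (orbit_rep ` X \<times> carrier G) = X"
    proof (intro Set.set_eqI iffI)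
      fix x assume "x \<in> (\<lambda>(r, g). act g r) ` (orbit_rep ` X \<times> carrier G)"
      then show "x \<in> X" using act_closed orbit_rep_in by auto
    next
      fix x assume x: "x \<in> X"
      then obtain g where g: "g \<in> carrier G" "orbit_rep x = act g x" by (rule orbit_rep_in_orbit)
      then have "act (inv g) (orbit_rep x) = x" using x by (simp flip: act_mult add: act_one)
      then show "x \<in> (\<lambda>(r, g). act g r) ` (orbit_rep ` X \<times> carrier G)"
        using x g(1) by (intro image_eqI[where x = "(orbit_rep x, inv g)"]) auto
    qed
  qed
qed

end

lemma carrier_sym_group: "carrier (sym_group m) = perms m"
  unfolding sym_group_def perms_def by simp

section \<open>Stacking a diagram on a permutation diagram\<close>

lemma nodes_iff: "x \<in> nodes n \<longleftrightarrow> x \<in> {- int n..-1} \<or> x \<in> {1..int n}"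
  unfolding nodes_def by auto

lemma stack_nodes_iff:
  "u \<in> stack_nodes n \<longleftrightarrow>
     (fst u = 0 \<and> snd u \<in> {- int n..-1}) \<or> (fst u \<in> {1, 2} \<and> snd u \<in> {1..int n})"
proof (cases u)
  case (Pair t i)
  have "(t, i) \<in> stack_nodes n" if "t = 0 \<and> i \<in> {- int n..-1} \<or> t = 1 \<and> i \<in> {1..int n}"
    using that unfolding stack_nodes_def
    by (intro UnI1 image_eqI[where x = i]) (auto simp: emb1_def nodes_iff)
  moreover have "(t, i) \<in> stack_nodes n" if "t = 2" "i \<in> {1..int n}"
    using that unfolding stack_nodes_def
    by (intro UnI2 image_eqI[where x = i]) (auto simp: emb2_def nodes_iff)
  moreover have "t = 0 \<and> i \<in> {- int n..-1} \<or> t \<in> {1, 2} \<and> i \<in> {1..int n}"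
    if "(t, i) \<in> stack_nodes n"
    using that unfolding stack_nodes_def by (auto simp: emb1_def emb2_def nodes_iff)
  ultimately show ?thesis using Pair by auto
qed

lemma middle_nodes_iff: "u \<in> middle_nodes n \<longleftrightarrow> fst u = 1 \<and> snd u \<in> {1..int n}"
  unfolding middle_nodes_def by (cases u) auto

lemma right_nodes_subset_nodes: "{1..int n} \<subseteq> nodes n"
  unfolding nodes_def by auto

lemma partition_on_permutes_image:
  assumes "partition_on A P" "p permutes A"
  shows "partition_on A ((`) p ` P)"
proof -
  have "partition_on (p ` A) ((`) p ` P - {{}})"
    using partition_on_inj_image[OF assms(1) inj_on_subset[OF permutes_inj[OF assms(2)]]] by simp
  moreover have "(`) p ` P - {{}} = (`) p ` P"
    using partition_onD3[OF assms(1)] by auto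
  ultimately show ?thesis using permutes_image[OF assms(2)] by simp
qed

definition perm_diagram :: "nat \<Rightarrow> (int \<Rightarrow> int) \<Rightarrow> int set set" where
  "perm_diagram n T = {{- x, T x} | x. x \<in> {1..int n}}"

lemma partition_on_perm_diagram_id: "partition_on (nodes n) (perm_diagram n id)"
proof (rule partition_onI)
  have "x \<in> \<Union> (perm_diagram n id)" if "x \<in> nodes n" for x
  proof -
    have "{- \<bar>x\<bar>, \<bar>x\<bar>} \<in> perm_diagram n id"
      using that unfolding perm_diagram_def nodes_iff by force
    moreover have "x \<in> {- \<bar>x\<bar>, \<bar>x\<bar>}" by (cases "x < 0") auto
    ultimately show ?thesis by blast
  qed
  then show "\<Union> (perm_diagram n id) = nodes n" by (auto simp: perm_diagram_def nodes_iff)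
qed (auto simp: perm_diagram_def disjnt_def)

lemma perm_diagram_eq_image:
  assumes "T permutes {1..int n}"
  shows "perm_diagram n T = (`) T ` perm_diagram n id"
proof -
  have "T ` {- x, x} = {- x, T x}" if "x \<in> {1..int n}" for x
    using that permutes_not_in[OF assms, of "- x"] by auto
  then have "(\<lambda>x. {- x, T x}) ` {1..int n} = (\<lambda>x. T ` {- x, x}) ` {1..int n}"
    by (rule image_cong[OF refl, symmetric])
  then show ?thesis unfolding perm_diagram_def Setcompr_eq_image image_image by simp
qed

locale stack_perm_diagram =
  fixes n :: nat and d :: "int set set" and T :: "int \<Rightarrow> int"
  assumes partition: "partition_on (nodes n) d"
    and T_permutes: "T permutes {1..int n}"
begin

abbreviation "gen \<equiv> {(emb1 x, emb1 y) | x y. \<exists>B\<in>d. x \<in> B \<and> y \<in> B}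
      \<union> {(emb2 x, emb2 y) | x y. \<exists>B\<in>perm_diagram n T. x \<in> B \<and> y \<in> B}"

abbreviation "rel \<equiv> stack_rel d (perm_diagram n T)"

lemma rel_eq: "rel = gen\<^sup>*"
  unfolding stack_rel_def ..

text \<open>Every stacked node is joined to the node origin u of d: a right node of the
  permutation diagram is pulled back along T, every other node is its own origin.\<close>
definition origin :: "nat \<times> int \<Rightarrow> int" where
  "origin u = (if fst u = 2 then inv' T (snd u) else snd u)"

definition component :: "int set \<Rightarrow> (nat \<times> int) set" where
  "component B = {v \<in> stack_nodes n. origin v \<in> B}"

lemma block_unique: "B \<in> d \<Longrightarrow> B' \<in> d \<Longrightarrow> x \<in> B \<Longrightarrow> x \<in> B' \<Longrightarrow> B = B'"
  using partition_onD2[OF partition] by (auto simp: disjoint_def)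

lemma block_exists: "x \<in> nodes n \<Longrightarrow> \<exists>B\<in>d. x \<in> B"
  using partition_onD1[OF partition] by auto

lemma origin_emb1 [simp]: "origin (emb1 x) = x"
  unfolding origin_def emb1_def by auto

lemma origin_in_nodes: "u \<in> stack_nodes n \<Longrightarrow> origin u \<in> nodes n"
  using permutes_in_image[OF permutes_inv[OF T_permutes], of "snd u"]
  unfolding stack_nodes_iff origin_def nodes_iff by auto

lemma generator_same_block:
  assumes "(v, w) \<in> gen"
  shows "v \<in> stack_nodes n \<and> w \<in> stack_nodes n \<and> (\<exists>B\<in>d. origin v \<in> B \<and> origin w \<in> B)"
  using assms
proof (elim UnE CollectE exE conjE)
  fix x y assume vw: "(v, w) = (emb1 x, emb1 y)" "\<exists>B\<in>d. x \<in> B \<and> y \<in> B"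
  then have "x \<in> nodes n" "y \<in> nodes n" using partition_onD1[OF partition] by blast+
  then show ?thesis using vw unfolding stack_nodes_def by simp
next
  fix x y assume vw: "(v, w) = (emb2 x, emb2 y)" "\<exists>B\<in>perm_diagram n T. x \<in> B \<and> y \<in> B"
  then obtain z where z: "z \<in> {1..int n}" "x \<in> {- z, T z}" "y \<in> {- z, T z}"
    unfolding perm_diagram_def by blast
  have Tz: "T z \<in> {1..int n}" using z(1) permutes_in_image[OF T_permutes] by blast
  have ends: "emb2 (- z) \<in> stack_nodes n \<and> origin (emb2 (- z)) = z"
             "emb2 (T z) \<in> stack_nodes n \<and> origin (emb2 (T z)) = z"
    using z(1) Tz permutes_inverses(2)[OF T_permutes]
    by (auto simp: stack_nodes_iff origin_def emb2_def)
  have "v = emb2 x" "w = emb2 y" using vw(1) by simp_all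
  then have "v \<in> stack_nodes n \<and> origin v = z" "w \<in> stack_nodes n \<and> origin w = z"
    using z(2,3) ends by auto
  moreover obtain B where "B \<in> d" "z \<in> B" using block_exists z(1) by (auto simp: nodes_iff)
  ultimately show ?thesis by auto
qed

lemma rel_same_block:
  assumes "(u, v) \<in> rel"
  shows "u = v \<or> u \<in> stack_nodes n \<and> v \<in> stack_nodes n \<and> (\<exists>B\<in>d. origin u \<in> B \<and> origin v \<in> B)"
  using assms unfolding rel_eq
proof (induction rule: rtrancl_induct)
  case (step v w)
  obtain B where B: "v \<in> stack_nodes n" "w \<in> stack_nodes n" "B \<in> d" "origin v \<in> B" "origin w \<in> B"
    using generator_same_block[OF step(2)] by blast
  from step(3) show ?case
  proof
    assume "u = v"
    then show ?case using B by blast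
  next
    assume "u \<in> stack_nodes n \<and> v \<in> stack_nodes n \<and> (\<exists>B\<in>d. origin u \<in> B \<and> origin v \<in> B)"
    then show ?case using B block_unique by blast
  qed
qed simp

lemma rel_emb1_origin:
  assumes "u \<in> stack_nodes n"
  shows "(u, emb1 (origin u)) \<in> rel \<and> (emb1 (origin u), u) \<in> rel"
proof (cases "fst u = 2")
  case True
  then obtain j where j: "u = (2, j)" "j \<in> {1..int n}"
    using assms by (cases u) (auto simp: stack_nodes_iff)
  define z where "z = inv' T j"
  have z: "z \<in> {1..int n}" "T z = j"
    using j(2) permutes_in_image[OF permutes_inv[OF T_permutes]] permutes_inverses(1)[OF T_permutes]
    unfolding z_def by auto
  have "emb1 (origin u) = emb2 (- z)" "u = emb2 (T z)"
    using j z by (auto simp: origin_def emb1_def emb2_def z_def)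
  moreover have "{- z, T z} \<in> perm_diagram n T" using z(1) unfolding perm_diagram_def by blast
  then have "(emb2 (- z), emb2 (T z)) \<in> gen" "(emb2 (T z), emb2 (- z)) \<in> gen" by blast+
  ultimately show ?thesis unfolding rel_eq by auto
next
  case False
  then have "emb1 (origin u) = u"
    using assms by (cases u) (auto simp: stack_nodes_iff origin_def emb1_def)
  then show ?thesis unfolding rel_eq by simp
qed

lemma rel_Image:
  assumes "u \<in> stack_nodes n" "B \<in> d" "origin u \<in> B"
  shows "rel `` {u} = component B"
proof
  show "rel `` {u} \<subseteq> component B"
    using assms rel_same_block block_unique unfolding component_def by blast
  show "component B \<subseteq> rel `` {u}"
  proof
    fix v assume v: "v \<in> component B"
    then have "(emb1 (origin u), emb1 (origin v)) \<in> gen"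
      using assms unfolding component_def by blast
    then have "(emb1 (origin u), emb1 (origin v)) \<in> rel" unfolding rel_eq by (rule r_into_rtrancl)
    moreover have "(u, emb1 (origin u)) \<in> rel" "(emb1 (origin v), v) \<in> rel"
      using rel_emb1_origin assms(1) v unfolding component_def by auto
    ultimately have "(u, v) \<in> rel" unfolding rel_eq by (meson rtrancl_trans)
    then show "v \<in> rel `` {u}" by (rule ImageI) simp
  qed
qed

lemma stack_comps_eq: "stack_comps n d (perm_diagram n T) = component ` d"
proof
  show "stack_comps n d (perm_diagram n T) \<subseteq> component ` d"
  proof
    fix C assume "C \<in> stack_comps n d (perm_diagram n T)"
    then obtain u where u: "u \<in> stack_nodes n" "C = rel `` {u}"
      unfolding stack_comps_def quotient_def by blast
    then obtain B where "B \<in> d" "origin u \<in> B" using block_exists origin_in_nodes by blast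
    then show "C \<in> component ` d" using rel_Image u by auto
  qed
  show "component ` d \<subseteq> stack_comps n d (perm_diagram n T)"
  proof
    fix C assume "C \<in> component ` d"
    then obtain B where B: "B \<in> d" "C = component B" by blast
    then obtain x where x: "x \<in> B" using partition_onD3[OF partition] by fastforce
    then have x_node: "emb1 x \<in> stack_nodes n"
      using B partition_onD1[OF partition] unfolding stack_nodes_def by blast
    moreover have "C = rel `` {emb1 x}" using rel_Image[OF x_node] B x by simp
    ultimately show "C \<in> stack_comps n d (perm_diagram n T)"
      unfolding stack_comps_def quotient_def by blast
  qed
qed

lemma component_outer_subset:
  assumes "B \<in> d"
  shows "snd ` (component B \<inter> outer_nodes n) \<subseteq> T ` B"
proof
  fix i assume "i \<in> snd ` (component B \<inter> outer_nodes n)"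
  then obtain t where ti: "(t, i) \<in> stack_nodes n" "(t, i) \<notin> middle_nodes n" "origin (t, i) \<in> B"
    unfolding component_def outer_nodes_def by auto
  show "i \<in> T ` B"
  proof (cases "t = 2")
    case True
    then show ?thesis
      using ti(3) permutes_inverses(1)[OF T_permutes, of i] by (force simp: origin_def)
  next
    case False
    then have "i \<notin> {1..int n}" using ti(1,2) by (auto simp: stack_nodes_iff middle_nodes_iff)
    then show ?thesis
      using ti(3) False permutes_not_in[OF T_permutes, of i] by (force simp: origin_def)
  qed
qed

lemma image_subset_component_outer:
  assumes "B \<in> d"
  shows "T ` B \<subseteq> snd ` (component B \<inter> outer_nodes n)"
proof
  fix i assume "i \<in> T ` B"
  then obtain x where x: "x \<in> B" "i = T x" by blast
  have "x \<in> nodes n" using x assms partition_onD1[OF partition] by blast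
  then consider "x \<in> {- int n..-1}" | "x \<in> {1..int n}" unfolding nodes_iff by blast
  then have "(if x < 0 then 0 else 2, T x) \<in> component B \<inter> outer_nodes n"
  proof cases
    case 1
    then show ?thesis using x permutes_not_in[OF T_permutes, of x]
      by (auto simp: component_def outer_nodes_def stack_nodes_iff middle_nodes_iff origin_def)
  next
    case 2
    then show ?thesis using x permutes_in_image[OF T_permutes, of x] permutes_inverses(2)[OF T_permutes]
      by (auto simp: component_def outer_nodes_def stack_nodes_iff middle_nodes_iff origin_def)
  qed
  then show "i \<in> snd ` (component B \<inter> outer_nodes n)" using x(2) by force
qed

lemma component_outer: "B \<in> d \<Longrightarrow> snd ` (component B \<inter> outer_nodes n) = T ` B"
  using component_outer_subset image_subset_component_outer by blast

lemma dcomp_eq: "dcomp n d (perm_diagram n T) = (`) T ` d"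
  using component_outer partition_onD3[OF partition]
  unfolding dcomp_def stack_comps_eq by fastforce

lemma nmid_eq: "nmid n d (perm_diagram n T) = 0"
proof -
  have "component B \<inter> outer_nodes n \<noteq> {}" if "B \<in> d" for B
    using component_outer[OF that] partition_onD3[OF partition] that by force
  then have "{C \<in> stack_comps n d (perm_diagram n T). C \<subseteq> middle_nodes n} = {}"
    unfolding stack_comps_eq outer_nodes_def component_def by blast
  then show ?thesis unfolding nmid_def by (simp only: card.empty)
qed

end

section \<open>The right action of the symmetric group on diagrams\<close>

lemma last_right_iff: "m \<le> n \<Longrightarrow> x \<in> last_right n m \<longleftrightarrow> int (n - m) < x \<and> x \<le> int n"
  unfolding last_right_def by auto

lemma last_right_subset_nodes: "m \<le> n \<Longrightarrow> last_right n m \<subseteq> nodes n"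
  unfolding last_right_def nodes_def by auto

definition lift_perm :: "nat \<Rightarrow> nat \<Rightarrow> (nat \<Rightarrow> nat) \<Rightarrow> int \<Rightarrow> int" where
  "lift_perm n m \<sigma> x =
     (if x \<in> last_right n m then int (n - m) + int (\<sigma> (nat (x - int (n - m)))) else x)"

lemma lift_perm_shift:
  assumes "\<sigma> permutes {1..m}" "m \<le> n" "i \<in> {1..m}"
  shows "lift_perm n m \<sigma> (int (n - m) + int i) = int (n - m) + int (\<sigma> i)"
  using assms by (auto simp: lift_perm_def last_right_iff)

lemma lift_perm_permutes:
  assumes "\<sigma> permutes {1..m}" "m \<le> n"
  shows "lift_perm n m \<sigma> permutes last_right n m"
proof -
  let ?shift = "\<lambda>i::nat. int (n - m) + int i"
  have shift: "bij_betw ?shift {1..m} (last_right n m)"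
    by (rule bij_betw_byWitness[where f'="\<lambda>x. nat (x - int (n - m))"])
       (use assms(2) in \<open>auto simp: last_right_iff image_iff\<close>)
  have "lift_perm n m \<sigma> =
      (\<lambda>x. if x \<in> last_right n m then ?shift (\<sigma> (inv_into {1..m} ?shift x)) else x)"
  proof
    fix x
    show "lift_perm n m \<sigma> x =
      (if x \<in> last_right n m then ?shift (\<sigma> (inv_into {1..m} ?shift x)) else x)"
    proof (cases "x \<in> last_right n m")
      case True
      then have "x = ?shift (nat (x - int (n - m)))" "nat (x - int (n - m)) \<in> {1..m}"
        using assms(2) by (auto simp: last_right_iff)
      then have "inv_into {1..m} ?shift x = nat (x - int (n - m))"
        by (metis bij_betw_imp_inj_on[OF shift] inv_into_f_f)
      then show ?thesis using True by (simp add: lift_perm_def)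
    qed (simp add: lift_perm_def)
  qed
  then show ?thesis using permutes_bij_inv_into[OF assms(1) shift] by simp
qed

lemma lift_perm_comp:
  assumes "\<sigma> permutes {1..m}" "\<rho> permutes {1..m}" "m \<le> n"
  shows "lift_perm n m \<sigma> \<circ> lift_perm n m \<rho> = lift_perm n m (\<sigma> \<circ> \<rho>)"
proof
  fix x
  show "(lift_perm n m \<sigma> \<circ> lift_perm n m \<rho>) x = lift_perm n m (\<sigma> \<circ> \<rho>) x"
  proof (cases "x \<in> last_right n m")
    case True
    then have "nat (x - int (n - m)) \<in> {1..m}" using assms(3) by (auto simp: last_right_iff)
    then have "\<rho> (nat (x - int (n - m))) \<in> {1..m}" using permutes_in_image[OF assms(2)] by blast
    then show ?thesis using True assms(3) by (auto simp: lift_perm_def last_right_iff)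
  qed (simp add: lift_perm_def)
qed

lemma lift_perm_id: "m \<le> n \<Longrightarrow> lift_perm n m id = id"
  by (auto simp: lift_perm_def last_right_iff)

lemma lift_perm_permutes_nodes:
  assumes "\<sigma> permutes {1..m}" "m \<le> n"
  shows "lift_perm n m \<sigma> permutes {1..int n}"
  by (rule permutes_subset[OF lift_perm_permutes[OF assms]]) (use assms(2) in \<open>auto simp: last_right_iff\<close>)

lemma perm_diag_eq:
  assumes "\<sigma> permutes {1..m}" "m \<le> n"
  shows "perm_diag n m \<sigma> = perm_diagram n (lift_perm n m \<sigma>)"
proof (intro Set.set_eqI iffI)
  fix X assume "X \<in> perm_diag n m \<sigma>"
  then consider (fixed) i where "X = {- int i, int i}" "1 \<le> i" "i \<le> n - m"
    | (moved) i where "X = {- (int (n - m) + int i), int (n - m) + int (\<sigma> i)}" "i \<in> {1..m}"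
    unfolding perm_diag_def by auto
  then show "X \<in> perm_diagram n (lift_perm n m \<sigma>)"
  proof cases
    case fixed
    then have "X = {- int i, lift_perm n m \<sigma> (int i)}" "int i \<in> {1..int n}"
      using assms(2) by (auto simp: lift_perm_def last_right_iff)
    then show ?thesis unfolding perm_diagram_def by blast
  next
    case moved
    then have "X = {- (int (n - m) + int i), lift_perm n m \<sigma> (int (n - m) + int i)}"
        "int (n - m) + int i \<in> {1..int n}"
      using lift_perm_shift[OF assms] assms(2) by auto
    then show ?thesis unfolding perm_diagram_def by blast
  qed
next
  fix X assume "X \<in> perm_diagram n (lift_perm n m \<sigma>)"
  then obtain x where x: "X = {- x, lift_perm n m \<sigma> x}" "x \<in> {1..int n}"
    unfolding perm_diagram_def by blast
  show "X \<in> perm_diag n m \<sigma>"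
  proof (cases "x \<le> int (n - m)")
    case True
    then have "X = {- int (nat x), int (nat x)}" "1 \<le> nat x" "nat x \<le> n - m"
      using x assms(2) by (auto simp: lift_perm_def last_right_iff)
    then show ?thesis unfolding perm_diag_def by blast
  next
    case False
    define i where "i = nat (x - int (n - m))"
    have i: "i \<in> {1..m}" "x = int (n - m) + int i" using False x assms(2) unfolding i_def by auto
    then have "X = {- (int (n - m) + int i), int (n - m) + int (\<sigma> i)}"
      using x lift_perm_shift[OF assms] by simp
    then show ?thesis unfolding perm_diag_def using i(1) by auto
  qed
qed

lemma perm_diag_in_Diag:
  assumes "\<sigma> \<in> perms m" "m \<le> n"
  shows "perm_diag n m \<sigma> \<in> Diag n"
proof -
  have "\<sigma> permutes {1..m}" using assms(1) unfolding perms_def by simp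
  then have L: "lift_perm n m \<sigma> permutes {1..int n}" by (rule lift_perm_permutes_nodes[OF _ assms(2)])
  then have "lift_perm n m \<sigma> permutes nodes n"
    using right_nodes_subset_nodes by (rule permutes_subset)
  then have "partition_on (nodes n) ((`) (lift_perm n m \<sigma>) ` perm_diagram n id)"
    by (rule partition_on_permutes_image[OF partition_on_perm_diagram_id])
  then show ?thesis
    using assms perm_diagram_eq_image[OF L] perm_diag_eq
    unfolding Diag_def perms_def by simp
qed

definition act_diag :: "nat \<Rightarrow> nat \<Rightarrow> (nat \<Rightarrow> nat) \<Rightarrow> int set set \<Rightarrow> int set set" where
  "act_diag n m \<sigma> d = (`) (lift_perm n m \<sigma>) ` d"

lemma dcomp_perm_diag:
  assumes "\<sigma> \<in> perms m" "m \<le> n" "d \<in> Diag n"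
  shows "dcomp n d (perm_diag n m \<sigma>) = act_diag n m \<sigma> d"
    and "nmid n d (perm_diag n m \<sigma>) = 0"
proof -
  have \<sigma>: "\<sigma> permutes {1..m}" using assms(1) unfolding perms_def by simp
  interpret stack_perm_diagram n d "lift_perm n m \<sigma>"
    using assms(3) lift_perm_permutes_nodes[OF \<sigma> assms(2)]
    by unfold_locales (simp_all add: Diag_def)
  show "dcomp n d (perm_diag n m \<sigma>) = act_diag n m \<sigma> d"
    unfolding perm_diag_eq[OF \<sigma> assms(2)] dcomp_eq act_diag_def ..
  show "nmid n d (perm_diag n m \<sigma>) = 0"
    unfolding perm_diag_eq[OF \<sigma> assms(2)] by (rule nmid_eq)
qed

lemma act_diag_in_Diag:
  assumes "\<sigma> \<in> perms m" "m \<le> n" "d \<in> Diag n"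
  shows "act_diag n m \<sigma> d \<in> Diag n"
proof -
  have "\<sigma> permutes {1..m}" using assms(1) unfolding perms_def by simp
  then have "lift_perm n m \<sigma> permutes nodes n"
    using lift_perm_permutes_nodes[OF _ assms(2)] right_nodes_subset_nodes permutes_subset by blast
  then show ?thesis
    using partition_on_permutes_image assms(3) unfolding act_diag_def Diag_def by blast
qed

lemma act_diag_id: "m \<le> n \<Longrightarrow> act_diag n m id d = d"
  by (simp add: act_diag_def lift_perm_id)

lemma act_diag_comp:
  assumes "\<sigma> \<in> perms m" "\<rho> \<in> perms m" "m \<le> n"
  shows "act_diag n m (\<sigma> \<circ> \<rho>) d = act_diag n m \<sigma> (act_diag n m \<rho> d)"
  using lift_perm_comp[of \<sigma> m \<rho> n, symmetric] assms
  unfolding act_diag_def perms_def by (simp add: image_comp)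

lemma Jdiag_act_diag_imp:
  assumes "\<sigma> \<in> perms m" "m \<le> n" "Jdiag n m (act_diag n m \<sigma> d)"
  shows "Jdiag n m d"
proof -
  let ?L = "lift_perm n m \<sigma>"
  have "\<sigma> permutes {1..m}" using assms(1) unfolding perms_def by simp
  then have L: "?L permutes last_right n m" by (rule lift_perm_permutes[OF _ assms(2)])
  note last_iff = permutes_in_image[OF L] and inj = permutes_inj[OF L]
  from assms(3) consider (singleton) j where "j \<in> last_right n m" "{j} \<in> act_diag n m \<sigma> d"
    | (pair) j k B' where "j \<in> last_right n m" "k \<in> last_right n m" "j \<noteq> k"
        "B' \<in> act_diag n m \<sigma> d" "j \<in> B'" "k \<in> B'"
    unfolding Jdiag_def by blast
  then show ?thesis
  proof cases
    case singleton
    then obtain B where B: "B \<in> d" "?L ` B = {j}" unfolding act_diag_def by auto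
    then obtain x where x: "x \<in> B" "?L x = j" by (metis imageE insertI1)
    have "B = {x}" using B(2) x inj by (auto dest: injD)
    then show ?thesis using B(1) x(2) singleton(1) last_iff unfolding Jdiag_def by auto
  next
    case pair
    then obtain B x y where B: "B \<in> d" "x \<in> B" "y \<in> B" and xy: "?L x = j" "?L y = k"
      unfolding act_diag_def by auto
    then have "x \<in> last_right n m" "y \<in> last_right n m" "x \<noteq> y"
      using pair(1-3) last_iff[of x] last_iff[of y] by auto
    then show ?thesis using B unfolding Jdiag_def by blast
  qed
qed

lemma not_Jdiag_block:
  assumes "\<not> Jdiag n m d" "B \<in> d" "j \<in> B" "j \<in> last_right n m"
  shows "B \<inter> last_right n m = {j}" and "\<exists>x\<in>B. x \<notin> last_right n m"
proof -
  show "B \<inter> last_right n m = {j}" using assms unfolding Jdiag_def by blast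
  have "B \<noteq> {j}" using assms unfolding Jdiag_def by blast
  then obtain x where "x \<in> B" "x \<noteq> j" using assms(3) by blast
  then show "\<exists>x\<in>B. x \<notin> last_right n m" using assms unfolding Jdiag_def by blast
qed

text \<open>The block of j is pinned down by one of its nodes outside last_right n m, which
  neither relabelling moves; so both relabellings move that block to the same block.\<close>
lemma lift_perm_eq_of_act_diag_eq:
  assumes "\<sigma> permutes {1..m}" "\<rho> permutes {1..m}" "m \<le> n" "d \<in> Diag n" "\<not> Jdiag n m d"
    and eq: "act_diag n m \<sigma> d = act_diag n m \<rho> d" and j: "j \<in> last_right n m"
  shows "lift_perm n m \<sigma> j = lift_perm n m \<rho> j"
proof -
  let ?L\<sigma> = "lift_perm n m \<sigma>" and ?L\<rho> = "lift_perm n m \<rho>"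
  have L\<sigma>: "?L\<sigma> permutes last_right n m" by (rule lift_perm_permutes[OF assms(1,3)])
  have L\<rho>: "?L\<rho> permutes last_right n m" by (rule lift_perm_permutes[OF assms(2,3)])
  have partition: "partition_on (nodes n) d" using assms(4) unfolding Diag_def by simp
  obtain B where B: "B \<in> d" "j \<in> B"
    using j last_right_subset_nodes[OF assms(3)] partition_onD1[OF partition] by blast
  obtain x where x: "x \<in> B" "x \<notin> last_right n m" using not_Jdiag_block(2)[OF assms(5) B j] by blast
  have "?L\<sigma> ` B \<in> act_diag n m \<rho> d" using B(1) eq unfolding act_diag_def by blast
  then obtain B' where B': "B' \<in> d" "?L\<sigma> ` B = ?L\<rho> ` B'" unfolding act_diag_def by blast
  have "x \<in> ?L\<rho> ` B'" using B'(2) x permutes_not_in[OF L\<sigma> x(2)] by (metis image_eqI)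
  then obtain y where "y \<in> B'" "x = ?L\<rho> y" by blast
  then have "x \<in> B'" using x(2) permutes_in_image[OF L\<rho>] permutes_not_in[OF L\<rho>] by metis
  then have "B' = B" using B'(1) B(1) x(1) partition_onD2[OF partition] by (auto simp: disjoint_def)
  then have "?L\<sigma> ` (B \<inter> last_right n m) = ?L\<rho> ` (B \<inter> last_right n m)"
    using B'(2) permutes_inj[OF L\<sigma>] permutes_inj[OF L\<rho>] permutes_image[OF L\<sigma>] permutes_image[OF L\<rho>]
    by (simp add: image_Int)
  then show ?thesis using not_Jdiag_block(1)[OF assms(5) B j] by simp
qed

lemma act_diag_free:
  assumes "\<sigma> \<in> perms m" "\<rho> \<in> perms m" "m \<le> n" "d \<in> Diag n" "\<not> Jdiag n m d"
    and eq: "act_diag n m \<sigma> d = act_diag n m \<rho> d"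
  shows "\<sigma> = \<rho>"
proof
  have \<sigma>: "\<sigma> permutes {1..m}" and \<rho>: "\<rho> permutes {1..m}" using assms(1,2) unfolding perms_def by simp_all
  fix i
  show "\<sigma> i = \<rho> i"
  proof (cases "i \<in> {1..m}")
    case True
    then have "int (n - m) + int i \<in> last_right n m" using assms(3) by (auto simp: last_right_iff)
    then show ?thesis
      using lift_perm_eq_of_act_diag_eq[OF \<sigma> \<rho> assms(3-5) eq]
        lift_perm_shift[OF \<sigma> assms(3) True] lift_perm_shift[OF \<rho> assms(3) True] by simp
  qed (simp add: permutes_not_in[OF \<sigma>] permutes_not_in[OF \<rho>])
qed

definition diags_outside_J :: "nat \<Rightarrow> nat \<Rightarrow> int set set set" where
  "diags_outside_J n m = {d \<in> Diag n. \<not> Jdiag n m d}"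

lemma free_action_act_diag:
  assumes "m \<le> n"
  shows "free_action (sym_group m) (diags_outside_J n m) (act_diag n m)"
proof (intro free_action.intro[OF sym_group_is_group] free_action_axioms.intro,
    unfold carrier_sym_group sym_group_mult sym_group_one)
  show "act_diag n m \<sigma> d \<in> diags_outside_J n m"
    if "\<sigma> \<in> perms m" "d \<in> diags_outside_J n m" for \<sigma> d
    using that act_diag_in_Diag Jdiag_act_diag_imp assms unfolding diags_outside_J_def by blast
qed (use assms act_diag_id act_diag_comp act_diag_free in \<open>auto simp: diags_outside_J_def\<close>)

section \<open>A basis of the quotient\<close>

definition basis_vec :: "int set set \<Rightarrow> int set set \<Rightarrow> 'r::comm_ring_1" where
  "basis_vec d e = (if e = d then 1 else 0)"

lemma basis_vec_in_Pn: "d \<in> Diag n \<Longrightarrow> basis_vec d \<in> Pn n"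
  unfolding basis_vec_def Pn_def by auto

lemma inj_basis_vec:
  assumes "(1::'r::comm_ring_1) \<noteq> 0"
  shows "inj (basis_vec :: int set set \<Rightarrow> int set set \<Rightarrow> 'r)"
proof (rule injI)
  fix d d' :: "int set set"
  assume "(basis_vec d :: int set set \<Rightarrow> 'r) = basis_vec d'"
  then have "(basis_vec d d :: 'r) = basis_vec d' d" by simp
  then show "d = d'" using assms by (simp add: basis_vec_def split: if_splits)
qed

lemma finite_Diag: "finite (Diag n)"
  unfolding Diag_def by (rule finitely_many_partition_on) (simp add: nodes_def)

lemma finite_perms: "finite (perms m)"
  unfolding perms_def by (rule finite_permutations) simp

lemma sum_if_inj_on_eq:
  assumes "inj_on h A" "finite A" "a \<in> A"
  shows "(\<Sum>x\<in>A. if h x = h a then f x else 0) = f a"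
proof -
  have "(\<Sum>x\<in>A. if h x = h a then f x else 0) = (\<Sum>x\<in>A. if x = a then f x else 0)"
    using inj_on_eq_iff[OF assms(1) _ assms(3)] by (intro sum.cong) auto
  then show ?thesis using assms(2,3) by simp
qed

lemma pmult_basis_vec_left:
  assumes "d \<in> Diag n"
  shows "pmult \<delta> n (basis_vec d) g e =
    (\<Sum>d2\<in>Diag n. if dcomp n d d2 = e then g d2 * \<delta> ^ nmid n d d2 else 0)"
proof -
  have "pmult \<delta> n (basis_vec d) g e = (\<Sum>d1\<in>Diag n. if d1 = d then
      (\<Sum>d2\<in>Diag n. if dcomp n d d2 = e then g d2 * \<delta> ^ nmid n d d2 else 0) else 0)"
    unfolding pmult_def by (rule sum.cong) (simp_all add: basis_vec_def cong: if_cong)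
  then show ?thesis using assms finite_Diag by simp
qed

lemma ract_zero: "ract \<delta> n m f (\<lambda>_. 0) = (\<lambda>_. 0)"
  unfolding ract_def pmult_def RS_emb_def by (simp cong: if_cong)

lemma ract_basis_vec:
  assumes "m \<le> n" "d \<in> Diag n"
  shows "ract \<delta> n m (basis_vec d) c e = (\<Sum>\<sigma>\<in>perms m. if act_diag n m \<sigma> d = e then c \<sigma> else 0)"
proof -
  have "ract \<delta> n m (basis_vec d) c e = (\<Sum>d2\<in>Diag n. \<Sum>\<sigma>\<in>perms m. if perm_diag n m \<sigma> = d2 then
      (if dcomp n d d2 = e then c \<sigma> * \<delta> ^ nmid n d d2 else 0) else 0)"
    unfolding ract_def pmult_basis_vec_left[OF assms(2)] RS_emb_def sum_distrib_right
    by (intro sum.cong refl) (simp add: if_distrib[of "\<lambda>x. x * _"] cong: if_cong)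
  also have "\<dots> = (\<Sum>\<sigma>\<in>perms m. \<Sum>d2\<in>Diag n. if perm_diag n m \<sigma> = d2 then
      (if dcomp n d d2 = e then c \<sigma> * \<delta> ^ nmid n d d2 else 0) else 0)"
    by (rule sum.swap)
  also have "\<dots> = (\<Sum>\<sigma>\<in>perms m. if act_diag n m \<sigma> d = e then c \<sigma> else 0)"
    using perm_diag_in_Diag dcomp_perm_diag assms by (intro sum.cong) (simp_all add: finite_Diag)
  finally show ?thesis .
qed

lemma free_quotient_basis_trivial_ring:
  assumes "(1::'r::comm_ring_1) = 0"
  shows "free_quotient_basis (\<delta>::'r) n m {}"
proof -
  have "x = 0" for x :: 'r by (metis assms mult_1_right mult_zero_right)
  then show ?thesis unfolding free_quotient_basis_def Jm_def Pn_def by auto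
qed

context
  fixes n m :: nat and R :: "int set set set"
  assumes m_le_n: "m \<le> n"
    and R_subset: "R \<subseteq> diags_outside_J n m"
    and transversal: "bij_betw (\<lambda>(r, \<sigma>). act_diag n m \<sigma> r) (R \<times> perms m) (diags_outside_J n m)"
begin

lemma finite_transversal: "finite R"
  using R_subset finite_Diag[of n] unfolding diags_outside_J_def by (auto intro: finite_subset)

lemma sum_ract_basis_vec_orbit:
  assumes "r \<in> R" "\<sigma> \<in> perms m"
  shows "(\<Sum>r'\<in>R. ract \<delta> n m (basis_vec r') (c r') (act_diag n m \<sigma> r)) = c r \<sigma>"
proof -
  let ?h = "\<lambda>(r, \<sigma>). act_diag n m \<sigma> r"
  have "(\<Sum>r'\<in>R. ract \<delta> n m (basis_vec r') (c r') (act_diag n m \<sigma> r))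
      = (\<Sum>p\<in>R \<times> perms m. if ?h p = ?h (r, \<sigma>) then case_prod c p else 0)"
    using R_subset m_le_n
    by (simp add: ract_basis_vec diags_outside_J_def subset_iff sum.cartesian_product' cong: if_cong)
  also have "\<dots> = case_prod c (r, \<sigma>)"
    by (rule sum_if_inj_on_eq[OF bij_betw_imp_inj_on[OF transversal]])
       (use assms finite_transversal finite_perms in auto)
  finally show ?thesis by simp
qed

lemma sum_ract_basis_vec_outside:
  assumes "e \<notin> diags_outside_J n m"
  shows "(\<Sum>r\<in>R. ract \<delta> n m (basis_vec r) (c r) e) = 0"
proof -
  have "act_diag n m \<sigma> r \<noteq> e" if "r \<in> R" "\<sigma> \<in> perms m" for r \<sigma>
    using bij_betw_apply[OF transversal, of "(r, \<sigma>)"] that assms by auto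
  then show ?thesis using R_subset m_le_n by (simp add: ract_basis_vec diags_outside_J_def subset_iff)
qed

lemma sum_support_basis_vec:
  assumes "(1::'r::comm_ring_1) \<noteq> 0"
  shows "(\<Sum>b\<in>{b \<in> basis_vec ` R. a b \<noteq> (\<lambda>_. 0)}. ract \<delta> n m b (a b) e)
    = (\<Sum>r\<in>R. ract (\<delta>::'r) n m (basis_vec r) (a (basis_vec r)) e)"
proof -
  have "(\<Sum>b\<in>{b \<in> basis_vec ` R. a b \<noteq> (\<lambda>_. 0)}. ract \<delta> n m b (a b) e)
      = (\<Sum>b\<in>basis_vec ` R. ract \<delta> n m b (a b) e)"
    using finite_transversal by (intro sum.mono_neutral_left) (auto simp: ract_zero)
  also have "\<dots> = (\<Sum>r\<in>R. ract \<delta> n m (basis_vec r) (a (basis_vec r)) e)"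
    using inj_on_subset[OF inj_basis_vec[OF assms] subset_UNIV] by (simp add: sum.reindex)
  finally show ?thesis .
qed

lemma transversal_spans_quotient:
  assumes "(1::'r::comm_ring_1) \<noteq> 0" "f \<in> Pn n"
  shows "\<exists>a. (\<forall>b\<in>basis_vec ` R. a b \<in> RS m) \<and> finite {b \<in> basis_vec ` R. a b \<noteq> (\<lambda>_. 0)} \<and>
    (\<lambda>d. f d - (\<Sum>b\<in>{b \<in> basis_vec ` R. a b \<noteq> (\<lambda>_. 0)}. ract (\<delta>::'r) n m b (a b) d)) \<in> Jm n m"
proof -
  define a where "a b = (\<lambda>\<sigma>. if \<sigma> \<in> perms m then f (act_diag n m \<sigma> (inv_into R basis_vec b)) else 0)"
    for b :: "int set set \<Rightarrow> 'r"
  have coeff: "a (basis_vec r) \<sigma> = f (act_diag n m \<sigma> r)" if "r \<in> R" "\<sigma> \<in> perms m" for r \<sigma>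
    using that inv_into_f_f[OF inj_on_subset[OF inj_basis_vec[OF assms(1)] subset_UNIV]]
    unfolding a_def by simp
  have "(\<Sum>b\<in>{b \<in> basis_vec ` R. a b \<noteq> (\<lambda>_. 0)}. ract \<delta> n m b (a b) e)
      = (if e \<in> diags_outside_J n m then f e else 0)" for e
  proof (cases "e \<in> diags_outside_J n m")
    case True
    then have "e \<in> (\<lambda>(r, \<sigma>). act_diag n m \<sigma> r) ` (R \<times> perms m)"
      using bij_betw_imp_surj_on[OF transversal] by simp
    then obtain r \<sigma> where "r \<in> R" "\<sigma> \<in> perms m" "e = act_diag n m \<sigma> r" by auto
    then show ?thesis
      using True coeff sum_ract_basis_vec_orbit[of r \<sigma> \<delta> "\<lambda>r. a (basis_vec r)"]
      by (simp add: sum_support_basis_vec[OF assms(1)])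
  next
    case False
    then show ?thesis by (auto simp: sum_support_basis_vec[OF assms(1)] sum_ract_basis_vec_outside[OF False])
  qed
  then have "(\<lambda>d. f d - (\<Sum>b\<in>{b \<in> basis_vec ` R. a b \<noteq> (\<lambda>_. 0)}. ract \<delta> n m b (a b) d)) \<in> Jm n m"
    using assms(2) unfolding Jm_def Pn_def diags_outside_J_def by auto
  moreover have "\<forall>b\<in>basis_vec ` R. a b \<in> RS m" unfolding a_def RS_def by simp
  moreover have "finite {b \<in> basis_vec ` R. a b \<noteq> (\<lambda>_. 0)}" using finite_transversal by simp
  ultimately show ?thesis by blast
qed

lemma transversal_independent_mod_Jm:
  assumes "(1::'r::comm_ring_1) \<noteq> 0" "\<forall>b\<in>basis_vec ` R. a b \<in> RS m"
    and "(\<lambda>d. \<Sum>b\<in>{b \<in> basis_vec ` R. a b \<noteq> (\<lambda>_. 0)}. ract (\<delta>::'r) n m b (a b) d) \<in> Jm n m"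
  shows "\<forall>b\<in>basis_vec ` R. a b = (\<lambda>_. 0)"
proof (intro ballI ext)
  fix b :: "int set set \<Rightarrow> 'r" and \<sigma> assume "b \<in> basis_vec ` R"
  then obtain r where r: "r \<in> R" "b = basis_vec r" by blast
  show "a b \<sigma> = 0"
  proof (cases "\<sigma> \<in> perms m")
    case True
    have "act_diag n m \<sigma> r \<in> diags_outside_J n m"
      using bij_betw_apply[OF transversal, of "(r, \<sigma>)"] r(1) True by simp
    then have "(\<Sum>b\<in>{b \<in> basis_vec ` R. a b \<noteq> (\<lambda>_. 0)}. ract \<delta> n m b (a b) (act_diag n m \<sigma> r)) = 0"
      using assms(3) unfolding Jm_def diags_outside_J_def by blast
    then show ?thesis
      using sum_ract_basis_vec_orbit[OF r(1) True, of \<delta> "\<lambda>r. a (basis_vec r)"] r(2)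
      by (simp add: sum_support_basis_vec[OF assms(1)])
  next
    case False
    then show ?thesis using assms(2) \<open>b \<in> basis_vec ` R\<close> unfolding RS_def by blast
  qed
qed

lemma free_quotient_basis_transversal:
  assumes "(1::'r::comm_ring_1) \<noteq> 0"
  shows "free_quotient_basis (\<delta>::'r) n m (basis_vec ` R)"
  using R_subset basis_vec_in_Pn transversal_spans_quotient[OF assms] transversal_independent_mod_Jm[OF assms]
  unfolding free_quotient_basis_def diags_outside_J_def by blast

end

theorem lemma5p2:
  fixes \<delta> :: "'r::comm_ring_1" and n m :: nat
  assumes "m \<le> n"
  shows "free_right_RS_quotient \<delta> n m"
proof (cases "(1::'r) = 0")
  case True
  then show ?thesis
    using free_quotient_basis_trivial_ring unfolding free_right_RS_quotient_def by blast
next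
  case False
  interpret free_action "sym_group m" "diags_outside_J n m" "act_diag n m"
    by (rule free_action_act_diag[OF assms])
  obtain R where "R \<subseteq> diags_outside_J n m"
    and "bij_betw (\<lambda>(r, \<sigma>). act_diag n m \<sigma> r) (R \<times> perms m) (diags_outside_J n m)"
    using transversal_exists unfolding carrier_sym_group .
  then have "free_quotient_basis \<delta> n m (basis_vec ` R)"
    using free_quotient_basis_transversal[OF assms] False by blast
  then show ?thesis unfolding free_right_RS_quotient_def by blast
qed

end
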